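(* Let $\gamma\in(0,1]$. Let $E$ be an e-value for a null hypothesis (nonnegative with $\mathbb E[E]\le1$ under the null), $F$ a nonnegative random variable, and $\hat\alpha\in[0,1]$ a data-dependent threshold, all mutually arbitrarily dependent. Let $U\sim\mathrm{Uniform}[0,1]$ be independent of $(E,F,\hat\alpha)$, let $T:=\mathbf 1\{U\le(1-\gamma F^{-1})_+\}$, and define $$\tilde E^{\mathrm{SR}}:=(1-T)F+T\cdot\frac{1-\gamma}{(1-\gamma F^{-1})_+}\cdot E,\qquad \tilde E:=(1-T)F+T(1-\gamma)E.$$ Then $T_{\hat\alpha}(\tilde E^{\mathrm{SR}}):=\hat\alpha^{-1}\mathbf 1\{\tilde E^{\mathrm{SR}}\ge\hat\alpha^{-1}\}$ is an e-value (its expectation under the null is at most $1$), and $\tilde E^{\mathrm{SR}}\ge\tilde E$ almost surely.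
   Context: $x_+=\max(x,0)$, with $(1-\gamma F^{-1})_+=0$ when $F=0$. On the event $T=1$, $(1-\gamma F^{-1})_+>0$ almost surely, so $\tilde E^{\mathrm{SR}}$ is well defined almost surely (the second term is taken as $0$ when $T=0$). *)

theory Defs
  imports "HOL-Probability.Probability"
begin

definition e_value :: "'a measure \<Rightarrow> ('a \<Rightarrow> real) \<Rightarrow> bool" where
  "e_value M X \<longleftrightarrow> X \<in> borel_measurable M \<and> (\<forall>x\<in>space M. 0 \<le> X x)
     \<and> (\<integral>\<^sup>+ x. ennreal (X x) \<partial>M) \<le> 1"

definition pos_part_gam :: "real \<Rightarrow> real \<Rightarrow> real" where
  "pos_part_gam \<gamma> f = (if f = 0 then 0 else max (1 - \<gamma> / f) 0)"

definition T_ind :: "real \<Rightarrow> real \<Rightarrow> real \<Rightarrow> real" where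
  "T_ind \<gamma> u f = (if u \<le> pos_part_gam \<gamma> f then 1 else 0)"

definition E_SR :: "real \<Rightarrow> real \<Rightarrow> real \<Rightarrow> real \<Rightarrow> real" where
  "E_SR \<gamma> u f e = (1 - T_ind \<gamma> u f) * f
     + (if T_ind \<gamma> u f = 1 then (1 - \<gamma>) / pos_part_gam \<gamma> f * e else 0)"

definition E_tilde :: "real \<Rightarrow> real \<Rightarrow> real \<Rightarrow> real \<Rightarrow> real" where
  "E_tilde \<gamma> u f e = (1 - T_ind \<gamma> u f) * f + T_ind \<gamma> u f * (1 - \<gamma>) * e"

text \<open>T_alpha(x) = alpha^{-1} 1{x >= alpha^{-1}}; equal to 0 when alpha = 0 (alpha^{-1} = infinity).\<close>
definition T_alpha :: "real \<Rightarrow> real \<Rightarrow> real" where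
  "T_alpha a x = (if a = 0 then 0 else if x \<ge> 1 / a then 1 / a else 0)"

end

theory Submission
  imports Defs
begin

text \<open>Condition on \<open>(E, F, \<alpha>)\<close> and let \<open>p = (1 - \<gamma>/F)\<^sub>+\<close>. With probability \<open>p\<close> the
  rounded value is \<open>(1 - \<gamma>) E / p\<close>, and since \<open>T\<^sub>\<alpha>(x) \<le> x\<close> this branch contributes at most
  \<open>(1 - \<gamma>) E\<close>. With probability \<open>1 - p\<close> it is \<open>F\<close>, which is rejected only if
  \<open>F \<ge> 1/\<alpha>\<close>; then \<open>1 - p \<le> \<gamma>/F\<close>, so this branch contributes at most \<open>\<gamma>/(\<alpha>F) \<le> \<gamma>\<close>.
  By independence of \<open>U\<close> and Fubini, \<open>\<bbbE>[T\<^sub>\<alpha>(E_SR)] \<le> \<gamma> + (1 - \<gamma>) \<bbbE>[E] \<le> 1\<close>.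
  The domination \<open>E_SR \<ge> E_tilde\<close> holds pointwise because \<open>p \<le> 1\<close>, except on the null
  event \<open>U = 0\<close>.\<close>

lemma borel_measurable_pos_part_gam [measurable (raw)]:
  assumes [measurable]: "f \<in> borel_measurable M"
  shows "(\<lambda>x. pos_part_gam \<gamma> (f x)) \<in> borel_measurable M"
  unfolding pos_part_gam_def by measurable

lemma borel_measurable_T_alpha [measurable (raw)]:
  assumes [measurable]: "f \<in> borel_measurable M" "g \<in> borel_measurable M"
  shows "(\<lambda>x. T_alpha (f x) (g x)) \<in> borel_measurable M"
  unfolding T_alpha_def by measurable

lemma E_SR_eq: "E_SR \<gamma> u f e = (if u \<le> pos_part_gam \<gamma> f then (1 - \<gamma>) / pos_part_gam \<gamma> f * e else f)"
  unfolding E_SR_def T_ind_def by auto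

lemma borel_measurable_E_SR [measurable (raw)]:
  assumes [measurable]: "u \<in> borel_measurable M" "f \<in> borel_measurable M" "e \<in> borel_measurable M"
  shows "(\<lambda>x. E_SR \<gamma> (u x) (f x) (e x)) \<in> borel_measurable M"
  unfolding E_SR_eq by measurable

lemma pos_part_gam_nonneg: "0 \<le> pos_part_gam \<gamma> f"
  unfolding pos_part_gam_def by auto

lemma pos_part_gam_le_1: "0 \<le> \<gamma> \<Longrightarrow> 0 \<le> f \<Longrightarrow> pos_part_gam \<gamma> f \<le> 1"
  unfolding pos_part_gam_def by auto

lemma T_alpha_nonneg: "0 \<le> a \<Longrightarrow> 0 \<le> T_alpha a x"
  unfolding T_alpha_def by auto

lemma T_alpha_le: "0 \<le> x \<Longrightarrow> T_alpha a x \<le> x"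
  unfolding T_alpha_def by auto

text \<open>\<open>0 < u\<close> is needed: for \<open>u = p = 0\<close> the division in \<^const>\<open>E_SR\<close> yields the junk value \<open>0\<close>.\<close>

lemma E_tilde_le_E_SR:
  assumes "0 \<le> e" "0 \<le> f" "0 < u" "0 \<le> \<gamma>" "\<gamma> \<le> 1"
  shows "E_tilde \<gamma> u f e \<le> E_SR \<gamma> u f e"
proof (cases "u \<le> pos_part_gam \<gamma> f")
  case True
  define p where "p = pos_part_gam \<gamma> f"
  have "0 < p" "p \<le> 1"
    using assms True pos_part_gam_le_1 unfolding p_def by auto
  then have "(1 - \<gamma>) * e \<le> (1 - \<gamma>) / p * e"
    using assms mult_left_le[of p "(1 - \<gamma>) * e"] by (simp add: le_divide_eq)
  then show ?thesis
    using True unfolding E_SR_eq E_tilde_def T_ind_def p_def by simp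
qed (simp add: E_SR_eq E_tilde_def T_ind_def)

lemma one_minus_pos_part_gam_mult_T_alpha_le:
  assumes "0 \<le> \<gamma>" "0 \<le> a"
  shows "(1 - pos_part_gam \<gamma> f) * T_alpha a f \<le> \<gamma>"
proof (cases "a = 0 \<or> f < 1 / a")
  case True
  then show ?thesis
    using assms by (auto simp: T_alpha_def)
next
  case False
  then have a: "0 < a" and f: "1 / a \<le> f"
    using assms by auto
  then have "0 < f"
    using less_le_trans[OF divide_pos_pos[of 1 a]] by auto
  show ?thesis
  proof (cases "\<gamma> \<le> f")
    case True
    then have "1 - pos_part_gam \<gamma> f = \<gamma> / f"
      using \<open>0 < f\<close> assms by (simp add: pos_part_gam_def field_simps)
    moreover have "\<gamma> / f * (1 / a) \<le> \<gamma> / f * f"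
      using f \<open>0 < f\<close> assms by (intro mult_left_mono) auto
    ultimately show ?thesis
      using a f \<open>0 < f\<close> by (simp add: T_alpha_def)
  next
    case False
    then have "pos_part_gam \<gamma> f = 0"
      using \<open>0 < f\<close> by (simp add: pos_part_gam_def field_simps)
    then show ?thesis
      using False a f by (simp add: T_alpha_def)
  qed
qed

lemma nn_integral_uniform_threshold:
  fixes p :: real and A B :: ennreal
  assumes "0 \<le> p" "p \<le> 1"
  shows "(\<integral>\<^sup>+ u. (if u \<le> p then A else B) \<partial>uniform_measure lborel {0..1})
    = A * ennreal p + B * ennreal (1 - p)"
proof -
  have split: "(if u \<le> p then A else B) = A * indicator {..p} u + B * indicator {p<..} u" for u
    by (simp add: indicator_def)
  have "{0..1} \<inter> {..p} = {0..p}" "{0..1} \<inter> {p<..} = {p<..1}"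
    using assms by auto
  then show ?thesis
    unfolding split using assms
    by (simp add: nn_integral_add nn_integral_cmult_indicator divide_ennreal_def)
qed

lemma nn_integral_uniform_T_alpha_E_SR_le:
  assumes "0 \<le> e" "0 \<le> f" "0 \<le> a" "0 \<le> \<gamma>" "\<gamma> \<le> 1"
  shows "(\<integral>\<^sup>+ u. ennreal (T_alpha a (E_SR \<gamma> u f e)) \<partial>uniform_measure lborel {0..1})
    \<le> ennreal (\<gamma> + (1 - \<gamma>) * e)"
proof -
  define p where "p = pos_part_gam \<gamma> f"
  have p: "0 \<le> p" "p \<le> 1"
    using assms pos_part_gam_nonneg pos_part_gam_le_1 unfolding p_def by auto
  define A where "A = T_alpha a ((1 - \<gamma>) / p * e)"
  define B where "B = T_alpha a f"
  have "A \<ge> 0" "B \<ge> 0"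
    using assms T_alpha_nonneg unfolding A_def B_def by auto
  have "p * A \<le> (1 - \<gamma>) * e"
  proof (cases "p = 0")
    case False
    then have "p * A \<le> p * ((1 - \<gamma>) / p * e)"
      using assms p unfolding A_def by (intro mult_left_mono T_alpha_le) auto
    then show ?thesis
      using False by simp
  qed (use assms in simp)
  moreover have "(1 - p) * B \<le> \<gamma>"
    using one_minus_pos_part_gam_mult_T_alpha_le assms unfolding p_def B_def by auto
  ultimately have "p * A + (1 - p) * B \<le> \<gamma> + (1 - \<gamma>) * e"
    by linarith
  have "ennreal (T_alpha a (E_SR \<gamma> u f e)) = (if u \<le> p then ennreal A else ennreal B)" for u
    by (simp add: E_SR_eq A_def B_def p_def)
  then have "(\<integral>\<^sup>+ u. ennreal (T_alpha a (E_SR \<gamma> u f e)) \<partial>uniform_measure lborel {0..1})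
      = ennreal A * ennreal p + ennreal B * ennreal (1 - p)"
    using nn_integral_uniform_threshold[OF p] by simp
  also have "\<dots> = ennreal (p * A + (1 - p) * B)"
    using \<open>A \<ge> 0\<close> \<open>B \<ge> 0\<close> p by (simp add: ennreal_mult' ennreal_plus[symmetric] mult.commute)
  also have "\<dots> \<le> ennreal (\<gamma> + (1 - \<gamma>) * e)"
    by (rule ennreal_leI) fact
  finally show ?thesis .
qed

lemma e_value_affine:
  assumes "prob_space M" "e_value M E" "0 \<le> \<gamma>" "\<gamma> \<le> 1"
  shows "e_value M (\<lambda>x. \<gamma> + (1 - \<gamma>) * E x)"
proof -
  interpret prob_space M by fact
  have [measurable]: "E \<in> borel_measurable M" and E: "\<forall>x\<in>space M. 0 \<le> E x"
    and E_int: "(\<integral>\<^sup>+ x. ennreal (E x) \<partial>M) \<le> 1"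
    using assms(2) unfolding e_value_def by auto
  have "(\<integral>\<^sup>+ x. ennreal (\<gamma> + (1 - \<gamma>) * E x) \<partial>M)
      = (\<integral>\<^sup>+ x. ennreal \<gamma> + ennreal (1 - \<gamma>) * ennreal (E x) \<partial>M)"
    using E assms(3,4) by (intro nn_integral_cong) (simp add: ennreal_plus ennreal_mult)
  also have "\<dots> = ennreal \<gamma> + ennreal (1 - \<gamma>) * (\<integral>\<^sup>+ x. ennreal (E x) \<partial>M)"
    by (simp add: nn_integral_add nn_integral_cmult emeasure_space_1)
  also have "\<dots> \<le> ennreal \<gamma> + ennreal (1 - \<gamma>) * 1"
    using E_int by (intro add_left_mono mult_left_mono) auto
  also have "\<dots> = 1"
    using assms(3,4) by (simp flip: ennreal_plus)
  finally show ?thesis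
    using E assms(3,4) unfolding e_value_def by simp
qed

lemma e_value_nn_integral_mono:
  assumes "e_value M Y" "X \<in> borel_measurable M" "\<forall>x\<in>space M. 0 \<le> X x"
    and "(\<integral>\<^sup>+ x. ennreal (X x) \<partial>M) \<le> (\<integral>\<^sup>+ x. ennreal (Y x) \<partial>M)"
  shows "e_value M X"
  using assms unfolding e_value_def by auto

lemma (in prob_space) pair_measure_distr_eq_indep_set:
  assumes [measurable]: "X \<in> measurable M S" "Y \<in> measurable M T"
    and indep: "indep_set (sigma_sets (space M) {X -` A \<inter> space M | A. A \<in> sets S})
      (sigma_sets (space M) {Y -` B \<inter> space M | B. B \<in> sets T})"
  shows "distr M S X \<Otimes>\<^sub>M distr M T Y = distr M (S \<Otimes>\<^sub>M T) (\<lambda>x. (X x, Y x))"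
proof (rule pair_measure_eqI)
  show "sigma_finite_measure (distr M S X)" "sigma_finite_measure (distr M T Y)"
    by (simp_all add: prob_space_distr prob_space_imp_sigma_finite)
next
  fix A B assume "A \<in> sets (distr M S X)" "B \<in> sets (distr M T Y)"
  then have AB [measurable]: "A \<in> sets S" "B \<in> sets T"
    by simp_all
  have "X -` A \<inter> space M \<in> sigma_sets (space M) {X -` A \<inter> space M | A. A \<in> sets S}"
    "Y -` B \<inter> space M \<in> sigma_sets (space M) {Y -` B \<inter> space M | B. B \<in> sets T}"
    using AB by (blast intro: sigma_sets.Basic)+
  then have "prob ((X -` A \<inter> space M) \<inter> (Y -` B \<inter> space M))
      = prob (X -` A \<inter> space M) * prob (Y -` B \<inter> space M)"
    using indep unfolding indep_sets2_eq by blast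
  moreover have "(\<lambda>x. (X x, Y x)) -` (A \<times> B) \<inter> space M = (X -` A \<inter> space M) \<inter> (Y -` B \<inter> space M)"
    by auto
  ultimately show "emeasure (distr M S X) A * emeasure (distr M T Y) B
      = emeasure (distr M (S \<Otimes>\<^sub>M T) (\<lambda>x. (X x, Y x))) (A \<times> B)"
    by (simp add: emeasure_distr emeasure_eq_measure ennreal_mult)
qed simp

lemma (in prob_space) nn_integral_indep_set:
  assumes [measurable]: "X \<in> measurable M S" "Y \<in> measurable M T"
    and indep: "indep_set (sigma_sets (space M) {X -` A \<inter> space M | A. A \<in> sets S})
      (sigma_sets (space M) {Y -` B \<inter> space M | B. B \<in> sets T})"
    and g: "g \<in> borel_measurable (S \<Otimes>\<^sub>M T)"
  shows "(\<integral>\<^sup>+ x. g (X x, Y x) \<partial>M) = (\<integral>\<^sup>+ x. (\<integral>\<^sup>+ u. g (u, Y x) \<partial>distr M S X) \<partial>M)"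
proof -
  interpret XY: pair_prob_space "distr M S X" "distr M T Y"
    by (simp add: pair_prob_space_def pair_sigma_finite_def prob_space_distr prob_space_imp_sigma_finite)
  have sets_prod: "sets (distr M S X \<Otimes>\<^sub>M distr M T Y) = sets (S \<Otimes>\<^sub>M T)"
    by (rule sets_pair_measure_cong) simp_all
  have [measurable]: "g \<in> borel_measurable (distr M S X \<Otimes>\<^sub>M distr M T Y)"
    using g by (simp add: measurable_cong_sets[OF sets_prod refl])
  have "(\<integral>\<^sup>+ x. g (X x, Y x) \<partial>M) = (\<integral>\<^sup>+ z. g z \<partial>distr M (S \<Otimes>\<^sub>M T) (\<lambda>x. (X x, Y x)))"
    using g by (simp add: nn_integral_distr)
  also have "\<dots> = (\<integral>\<^sup>+ z. g z \<partial>(distr M S X \<Otimes>\<^sub>M distr M T Y))"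
    by (simp add: pair_measure_distr_eq_indep_set[OF assms(1-3)])
  also have "\<dots> = (\<integral>\<^sup>+ v. (\<integral>\<^sup>+ u. g (u, v) \<partial>distr M S X) \<partial>distr M T Y)"
    by (simp add: XY.nn_integral_snd)
  also have "\<dots> = (\<integral>\<^sup>+ x. (\<integral>\<^sup>+ u. g (u, Y x) \<partial>distr M S X) \<partial>M)"
    by (simp add: nn_integral_distr)
  finally show ?thesis .
qed

lemma AE_pos_if_uniform:
  fixes U :: "'a \<Rightarrow> real"
  assumes "U \<in> borel_measurable M" "distr M lborel U = uniform_measure lborel {0..1}"
  shows "AE x in M. 0 < U x"
proof (rule AE_distrD[where M'=lborel])
  show "U \<in> measurable M lborel"
    using assms(1) by simp
  have "AE u in lborel. u \<in> {0..1::real} \<longrightarrow> 0 < u"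
    using AE_lborel_singleton[of "0::real"] by eventually_elim auto
  then show "AE u in distr M lborel U. 0 < u"
    unfolding assms(2) by (intro AE_uniform_measureI) simp_all
qed

lemma nn_integral_T_alpha_E_SR_le:
  fixes E F alpha U :: "'a \<Rightarrow> real"
  assumes "prob_space M" "0 \<le> \<gamma>" "\<gamma> \<le> 1"
    and [measurable]: "E \<in> borel_measurable M" "F \<in> borel_measurable M"
      "alpha \<in> borel_measurable M" "U \<in> borel_measurable M"
    and nonneg: "\<forall>x\<in>space M. 0 \<le> E x \<and> 0 \<le> F x \<and> 0 \<le> alpha x"
    and uniform: "distr M lborel U = uniform_measure lborel {0..1}"
    and indep: "prob_space.indep_set M
      (sigma_sets (space M) {U -` A \<inter> space M | A. A \<in> sets (borel :: real measure)})
      (sigma_sets (space M) {(\<lambda>x. (E x, F x, alpha x)) -` B \<inter> space M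
        | B. B \<in> sets (borel :: (real \<times> real \<times> real) measure)})"
  shows "(\<integral>\<^sup>+ x. ennreal (T_alpha (alpha x) (E_SR \<gamma> (U x) (F x) (E x))) \<partial>M)
    \<le> (\<integral>\<^sup>+ x. ennreal (\<gamma> + (1 - \<gamma>) * E x) \<partial>M)"
proof -
  interpret prob_space M by fact
  define g where "g = (\<lambda>(u, v :: real \<times> real \<times> real).
    ennreal (T_alpha (snd (snd v)) (E_SR \<gamma> u (fst (snd v)) (fst v))))"
  have sets_borel: "sets (borel :: (real \<times> real \<times> real) measure) = sets (borel \<Otimes>\<^sub>M (borel \<Otimes>\<^sub>M borel))"
    by (simp only: borel_prod)
  have "g \<in> borel_measurable (lborel \<Otimes>\<^sub>M borel)"
    unfolding measurable_cong_sets[OF sets_pair_measure_cong[OF refl sets_borel] refl] g_def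
    by measurable
  then have "(\<integral>\<^sup>+ x. g (U x, (E x, F x, alpha x)) \<partial>M)
      = (\<integral>\<^sup>+ x. (\<integral>\<^sup>+ u. g (u, (E x, F x, alpha x)) \<partial>distr M lborel U) \<partial>M)"
    using indep by (intro nn_integral_indep_set) simp_all
  then have "(\<integral>\<^sup>+ x. ennreal (T_alpha (alpha x) (E_SR \<gamma> (U x) (F x) (E x))) \<partial>M)
      = (\<integral>\<^sup>+ x. (\<integral>\<^sup>+ u. ennreal (T_alpha (alpha x) (E_SR \<gamma> u (F x) (E x)))
          \<partial>uniform_measure lborel {0..1}) \<partial>M)"
    by (simp add: g_def uniform)
  also have "\<dots> \<le> (\<integral>\<^sup>+ x. ennreal (\<gamma> + (1 - \<gamma>) * E x) \<partial>M)"
  proof (rule nn_integral_mono)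
    fix x assume "x \<in> space M"
    then show "(\<integral>\<^sup>+ u. ennreal (T_alpha (alpha x) (E_SR \<gamma> u (F x) (E x))) \<partial>uniform_measure lborel {0..1})
        \<le> ennreal (\<gamma> + (1 - \<gamma>) * E x)"
      using nonneg assms(2,3) by (intro nn_integral_uniform_T_alpha_E_SR_le) simp_all
  qed
  finally show ?thesis .
qed

theorem proposition9:
  fixes M :: "'a measure" and E F alpha U :: "'a \<Rightarrow> real" and \<gamma> :: real
  assumes "prob_space M"
    and "0 < \<gamma>" and "\<gamma> \<le> 1"
    and "e_value M E"
    and "F \<in> borel_measurable M" and "\<forall>x\<in>space M. 0 \<le> F x"
    and "alpha \<in> borel_measurable M" and "\<forall>x\<in>space M. 0 \<le> alpha x \<and> alpha x \<le> 1"
    and "U \<in> borel_measurable M"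
    and "distr M lborel U = uniform_measure lborel {0..1}"
    and "prob_space.indep_set M
           (sigma_sets (space M) {U -` A \<inter> space M | A. A \<in> sets (borel :: real measure)})
           (sigma_sets (space M) {(\<lambda>x. (E x, F x, alpha x)) -` B \<inter> space M
              | B. B \<in> sets (borel :: (real \<times> real \<times> real) measure)})"
  shows "e_value M (\<lambda>x. T_alpha (alpha x) (E_SR \<gamma> (U x) (F x) (E x)))
    \<and> (AE x in M. E_SR \<gamma> (U x) (F x) (E x) \<ge> E_tilde \<gamma> (U x) (F x) (E x))"
proof -
  note [measurable] = assms(5,7,9)
  have E_meas [measurable]: "E \<in> borel_measurable M" and E_nonneg: "\<forall>x\<in>space M. 0 \<le> E x"
    using assms(4) unfolding e_value_def by auto
  have "e_value M (\<lambda>x. T_alpha (alpha x) (E_SR \<gamma> (U x) (F x) (E x)))"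
  proof (rule e_value_nn_integral_mono)
    show "e_value M (\<lambda>x. \<gamma> + (1 - \<gamma>) * E x)"
      using assms(1-4) by (intro e_value_affine) simp_all
    show "(\<lambda>x. T_alpha (alpha x) (E_SR \<gamma> (U x) (F x) (E x))) \<in> borel_measurable M"
      by measurable
    show "\<forall>x\<in>space M. 0 \<le> T_alpha (alpha x) (E_SR \<gamma> (U x) (F x) (E x))"
      using assms(8) by (simp add: T_alpha_nonneg)
    show "(\<integral>\<^sup>+ x. ennreal (T_alpha (alpha x) (E_SR \<gamma> (U x) (F x) (E x))) \<partial>M)
        \<le> (\<integral>\<^sup>+ x. ennreal (\<gamma> + (1 - \<gamma>) * E x) \<partial>M)"
      using nn_integral_T_alpha_E_SR_le[OF assms(1) _ assms(3) E_meas assms(5,7,9) _ assms(10,11)]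
        assms(2,6,8) E_nonneg by simp
  qed
  moreover have "AE x in M. E_SR \<gamma> (U x) (F x) (E x) \<ge> E_tilde \<gamma> (U x) (F x) (E x)"
    using AE_pos_if_uniform[OF assms(9,10)]
  proof (rule AE_mp, intro AE_I2 impI)
    fix x assume "x \<in> space M" "0 < U x"
    then show "E_tilde \<gamma> (U x) (F x) (E x) \<le> E_SR \<gamma> (U x) (F x) (E x)"
      using assms(2,3,6) E_nonneg by (intro E_tilde_le_E_SR) auto
  qed
  ultimately show ?thesis ..
qed

end
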